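(* Consider the feedback loop described in the context, where $\tilde G$ is given by a proper real rational transfer-function matrix whose transfer function from $r_h$ to $t$ is scalar and strictly proper, $\tilde w$ is a white noise process jointly second-order with the initial state $\tilde x_0$ of $\tilde G$, and the ECDQ has finite positive step $\Delta$. If the dither $d$ is i.i.d., uniformly distributed on $(-\Delta/2,\Delta/2)$ and independent of $(\tilde w,\tilde x_0)$, then the error $r-t$ is i.i.d., uniformly distributed on $(-\Delta/2,\Delta/2)$, and independent of $(\tilde w,\tilde x_0)$.
   Context: The plant $\tilde G$ has inputs $(\tilde w,r_h)$ and outputs $(\tilde z,t)$, with $t$ scalar. The feedback path from $t$ to $r_h$ is an entropy-coded dithered quantizer (ECDQ) with a channel delay $h\in\mathbb N_0$: $y_{\mathcal E}(k)=\mathcal F_q(t(k)+d(k))$, where $\mathcal F_q:\mathbb R\to\{i\Delta:i\in\mathbb Z\}$ is a uniform quantizer with step $\Delta$; $y_q(k)=\mathcal O_k(y_{\mathcal E}(k),d(k))$ is a lossless (entropy) encoding; the channel delivers $u_q(k)=y_q(k-h)$ error-free; $u_{\mathcal D}(k)=\mathcal O^{-1}_{k-h}(u_q(k),d(k-h))=y_{\mathcal E}(k-h)$ is the lossless decoding; and $r_h(k)=u_{\mathcal D}(k)-d(k-h)$. The dither $d$ is known to both encoder and decoder. Define $r(k)=y_{\mathcal E}(k)-d(k)$, so that $r_h(k)=r(k-h)$. *)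

theory Defs
  imports "HOL-Probability.Probability"
begin

text \<open>Uniform (mid-tread, nearest-point) quantizer with step Delta, mapping the reals
  onto the lattice of integer multiples of Delta (ties rounded upwards).\<close>
definition uniform_quantizer :: "real \<Rightarrow> real \<Rightarrow> real" where
  "uniform_quantizer \<Delta> y = \<Delta> * of_int \<lfloor>y / \<Delta> + 1/2\<rfloor>"

definition unif_quant_noise :: "real \<Rightarrow> real measure" where
  "unif_quant_noise \<Delta> = uniform_measure lborel {-\<Delta>/2<..<\<Delta>/2}"

definition white_noise :: "'a measure \<Rightarrow> (nat \<Rightarrow> 'a \<Rightarrow> real^'m) \<Rightarrow> bool" where
  "white_noise M w \<longleftrightarrow>
     (\<forall>k. w k \<in> borel_measurable M) \<and>
     (\<forall>k i. integrable M (\<lambda>\<omega>. (w k \<omega> $ i)^2)) \<and>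
     (\<forall>k i. (\<integral>\<omega>. w k \<omega> $ i \<partial>M) = 0) \<and>
     (\<forall>k j i l. k \<noteq> j \<longrightarrow> (\<integral>\<omega>. w k \<omega> $ i * w j \<omega> $ l \<partial>M) = 0) \<and>
     (\<forall>k i l. (\<integral>\<omega>. w k \<omega> $ i * w k \<omega> $ l \<partial>M) = (\<integral>\<omega>. w 0 \<omega> $ i * w 0 \<omega> $ l \<partial>M))"

definition second_order :: "'a measure \<Rightarrow> ('a \<Rightarrow> real^'n) \<Rightarrow> bool" where
  "second_order M x \<longleftrightarrow> x \<in> borel_measurable M \<and> (\<forall>i. integrable M (\<lambda>\<omega>. (x \<omega> $ i)^2))"

text \<open>Independence of two random elements taking values in (possibly) different
  measurable spaces: independence of the generated sigma-algebras (this is exactly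
  what the library's indep_var unfolds to, cf. prob_space.indep_var_eq, without
  requiring equal value types).\<close>
definition indep_rv :: "'a measure \<Rightarrow> 'b measure \<Rightarrow> ('a \<Rightarrow> 'b) \<Rightarrow> 'c measure \<Rightarrow> ('a \<Rightarrow> 'c) \<Rightarrow> bool" where
  "indep_rv M S X T Y \<longleftrightarrow>
     X \<in> measurable M S \<and> Y \<in> measurable M T \<and>
     prob_space.indep_set M
       (sigma_sets (space M) { X -` A \<inter> space M | A. A \<in> sets S})
       (sigma_sets (space M) { Y -` A \<inter> space M | A. A \<in> sets T})"

end

(*
  The error r k - t k equals e (t k) (d k), where e c u = Q (c + u) - (c + u) for the quantizer Q.
  For fixed c the map u -> e c u sends the uniform distribution on (-Delta/2, Delta/2) to itself:
  if a is c modulo Delta, it is the reflection u -> -a - u on one part of the interval and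
  u -> Delta - a - u on the other.

  Since the transfer from r_h to t is strictly proper and the channel only delays, t k is a
  function of (w, x0) and of the past dither d 0, ..., d (k - 1). Hence for fixed (w, x0) the map
  from the dither sequence to the error sequence transforms each fresh coordinate by a
  measure-preserving map that depends only on the earlier ones, and so preserves the i.i.d.
  uniform law. As the dither is independent of (w, x0), the joint law of the error sequence and
  (w, x0) is the product of the i.i.d. uniform law with the law of (w, x0).
*)

theory Submission
  imports Defs
begin

lemma uniform_quantizer_eqI:
  assumes "0 < \<Delta>" "\<Delta> * of_int k - \<Delta>/2 \<le> y" "y < \<Delta> * of_int k + \<Delta>/2"
  shows "uniform_quantizer \<Delta> y = \<Delta> * of_int k"
proof -
  have "\<lfloor>y / \<Delta> + 1/2\<rfloor> = k"
    using assms by (intro floor_unique) (auto simp: field_simps)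
  then show ?thesis
    by (simp add: uniform_quantizer_def)
qed

lemma uniform_quantizer_measurable [measurable]:
  "uniform_quantizer \<Delta> \<in> borel_measurable borel"
  unfolding uniform_quantizer_def[abs_def] by measurable

text \<open>\<open>a\<close> is \<open>c\<close> modulo \<open>\<Delta>\<close>, so \<open>c + u\<close> is rounded either to \<open>\<Delta> * \<lfloor>c / \<Delta>\<rfloor>\<close> or to the next
  multiple of \<open>\<Delta>\<close>.\<close>

lemma uniform_quantizer_error_offset:
  fixes \<Delta> c u :: real
  assumes \<Delta>: "0 < \<Delta>" and u: "-\<Delta>/2 < u" "u < \<Delta>/2" and a: "a = \<Delta> * frac (c / \<Delta>)"
  shows "a + u < \<Delta>/2 \<Longrightarrow> uniform_quantizer \<Delta> (c + u) - (c + u) = - a - u"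
    and "\<Delta>/2 \<le> a + u \<Longrightarrow> uniform_quantizer \<Delta> (c + u) - (c + u) = \<Delta> - a - u"
proof -
  have a_bounds: "0 \<le> a" "a < \<Delta>"
    using \<Delta> frac_ge_0 frac_lt_1 by (auto simp: a)
  have c: "c = \<Delta> * of_int \<lfloor>c / \<Delta>\<rfloor> + a"
    using \<Delta> by (simp add: a frac_def algebra_simps)
  show "uniform_quantizer \<Delta> (c + u) - (c + u) = - a - u" if "a + u < \<Delta>/2"
  proof -
    have "uniform_quantizer \<Delta> (c + u) = \<Delta> * of_int \<lfloor>c / \<Delta>\<rfloor>"
      by (rule uniform_quantizer_eqI) (use \<Delta> u a_bounds that c in linarith)+
    with c show ?thesis by linarith
  qed
  show "uniform_quantizer \<Delta> (c + u) - (c + u) = \<Delta> - a - u" if "\<Delta>/2 \<le> a + u"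
  proof -
    have k: "\<Delta> * of_int (\<lfloor>c / \<Delta>\<rfloor> + 1) = \<Delta> * of_int \<lfloor>c / \<Delta>\<rfloor> + \<Delta>"
      by (simp add: algebra_simps)
    have "uniform_quantizer \<Delta> (c + u) = \<Delta> * of_int (\<lfloor>c / \<Delta>\<rfloor> + 1)"
      by (rule uniform_quantizer_eqI) (use \<Delta> u a_bounds that c k in linarith)+
    with c k show ?thesis by linarith
  qed
qed

lemma lborel_distr_reflection: "distr lborel borel (\<lambda>u. b - u) = (lborel :: real measure)"
proof -
  have "lborel = density (distr lborel borel (\<lambda>u. b + (-1) * u)) (\<lambda>_. ennreal \<bar>-1 :: real\<bar>)"
    by (rule lborel_real_affine) simp
  then show ?thesis
    by (simp add: density_1)
qed

lemma emeasure_lborel_reflection: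
  fixes b :: real
  assumes "S \<in> sets borel"
  shows "emeasure lborel ((\<lambda>u. b - u) -` S) = emeasure lborel S"
  using emeasure_distr[of "\<lambda>u. b - u" lborel borel S] assms
  by (simp add: lborel_distr_reflection)

lemma uniform_quantizer_error_preimage:
  fixes \<Delta> c :: real
  assumes \<Delta>: "0 < \<Delta>" and a: "a = \<Delta> * frac (c / \<Delta>)"
  shows "{u \<in> {-\<Delta>/2<..<\<Delta>/2}. uniform_quantizer \<Delta> (c + u) - (c + u) \<in> B}
       = (\<lambda>u. - a - u) -` (B \<inter> {-\<Delta>/2<..<\<Delta>/2 - a}) \<union> (\<lambda>u. \<Delta> - a - u) -` (B \<inter> {\<Delta>/2 - a<..\<Delta>/2})"
proof (intro set_eqI)
  fix u
  have bounds: "0 \<le> a" "a < \<Delta>"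
    using \<Delta> frac_ge_0 frac_lt_1 by (auto simp: a)
  consider "u \<notin> {-\<Delta>/2<..<\<Delta>/2}" | "u \<in> {-\<Delta>/2<..<\<Delta>/2}" "a + u < \<Delta>/2" | "u \<in> {-\<Delta>/2<..<\<Delta>/2}" "\<Delta>/2 \<le> a + u"
    by force
  then show "u \<in> {u \<in> {-\<Delta>/2<..<\<Delta>/2}. uniform_quantizer \<Delta> (c + u) - (c + u) \<in> B}
      \<longleftrightarrow> u \<in> (\<lambda>u. - a - u) -` (B \<inter> {-\<Delta>/2<..<\<Delta>/2 - a}) \<union> (\<lambda>u. \<Delta> - a - u) -` (B \<inter> {\<Delta>/2 - a<..\<Delta>/2})"
  proof cases
    case 1
    then show ?thesis
      using bounds by auto
  next
    case 2
    then have e: "uniform_quantizer \<Delta> (c + u) - (c + u) = - a - u"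
      using uniform_quantizer_error_offset(1)[OF \<Delta> _ _ a] by simp
    show ?thesis
      unfolding mem_Collect_eq e using 2 by auto
  next
    case 3
    then have e: "uniform_quantizer \<Delta> (c + u) - (c + u) = \<Delta> - a - u"
      using uniform_quantizer_error_offset(2)[OF \<Delta> _ _ a] by simp
    show ?thesis
      unfolding mem_Collect_eq e using 3 by auto
  qed
qed

lemma emeasure_uniform_quantizer_error:
  fixes \<Delta> c :: real
  assumes \<Delta>: "0 < \<Delta>" and B: "B \<in> sets borel"
  shows "emeasure lborel {u \<in> {-\<Delta>/2<..<\<Delta>/2}. uniform_quantizer \<Delta> (c + u) - (c + u) \<in> B}
       = emeasure lborel (B \<inter> {-\<Delta>/2<..<\<Delta>/2})"
proof -
  define a where "a = \<Delta> * frac (c / \<Delta>)"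
  have a: "0 \<le> a" "a < \<Delta>"
    using \<Delta> frac_ge_0 frac_lt_1 by (auto simp: a_def)
  define S\<^sub>1 where "S\<^sub>1 = B \<inter> {-\<Delta>/2<..<\<Delta>/2 - a}"
  define S\<^sub>2 where "S\<^sub>2 = B \<inter> {\<Delta>/2 - a<..\<Delta>/2}"
  have S: "S\<^sub>1 \<in> sets borel" "S\<^sub>2 \<in> sets borel"
    using B by (auto simp: S\<^sub>1_def S\<^sub>2_def)
  have "emeasure lborel {u \<in> {-\<Delta>/2<..<\<Delta>/2}. uniform_quantizer \<Delta> (c + u) - (c + u) \<in> B}
      = emeasure lborel ((\<lambda>u. - a - u) -` S\<^sub>1 \<union> (\<lambda>u. \<Delta> - a - u) -` S\<^sub>2)"
    unfolding uniform_quantizer_error_preimage[OF \<Delta> a_def] S\<^sub>1_def S\<^sub>2_def ..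
  also have "\<dots> = emeasure lborel ((\<lambda>u. - a - u) -` S\<^sub>1) + emeasure lborel ((\<lambda>u. \<Delta> - a - u) -` S\<^sub>2)"
    using measurable_sets_borel[OF _ S(1), of "\<lambda>u. - a - u"] measurable_sets_borel[OF _ S(2), of "\<lambda>u. \<Delta> - a - u"]
    by (intro plus_emeasure[symmetric]) (auto simp: S\<^sub>1_def S\<^sub>2_def)
  also have "\<dots> = emeasure lborel S\<^sub>1 + emeasure lborel S\<^sub>2"
    using S by (simp add: emeasure_lborel_reflection)
  also have "\<dots> = emeasure lborel (S\<^sub>1 \<union> S\<^sub>2)"
    using S by (intro plus_emeasure) (auto simp: S\<^sub>1_def S\<^sub>2_def)
  also have "\<dots> = emeasure lborel (B \<inter> {-\<Delta>/2<..<\<Delta>/2})"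
  proof (rule emeasure_eq_AE)
    show "AE u in lborel. u \<in> S\<^sub>1 \<union> S\<^sub>2 \<longleftrightarrow> u \<in> B \<inter> {-\<Delta>/2<..<\<Delta>/2}"
      using AE_lborel_singleton[of "\<Delta>/2"] AE_lborel_singleton[of "\<Delta>/2 - a"]
      by eventually_elim (use a in \<open>auto simp: S\<^sub>1_def S\<^sub>2_def\<close>)
  qed (use S B in auto)
  finally show ?thesis .
qed

lemma distr_uniform_quantizer_error:
  assumes "0 < \<Delta>"
  shows "distr (unif_quant_noise \<Delta>) borel (\<lambda>u. uniform_quantizer \<Delta> (c + u) - (c + u))
       = unif_quant_noise \<Delta>" (is "distr ?U borel ?e = ?U")
proof (rule measure_eqI)
  fix B assume "B \<in> sets (distr ?U borel ?e)"
  then have B: "B \<in> sets borel" by simp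
  have "?e \<in> measurable ?U borel"
    by (simp add: unif_quant_noise_def)
  then have "emeasure (distr ?U borel ?e) B = emeasure ?U (?e -` B \<inter> space ?U)"
    using B by (rule emeasure_distr)
  also have "\<dots> = emeasure lborel ({-\<Delta>/2<..<\<Delta>/2} \<inter> ?e -` B) / emeasure lborel {-\<Delta>/2<..<\<Delta>/2}"
    using B by (simp add: unif_quant_noise_def measurable_sets_borel[OF _ B])
  also have "{-\<Delta>/2<..<\<Delta>/2} \<inter> ?e -` B = {u \<in> {-\<Delta>/2<..<\<Delta>/2}. ?e u \<in> B}"
    by blast
  also have "emeasure lborel \<dots> = emeasure lborel (B \<inter> {-\<Delta>/2<..<\<Delta>/2})"
    by (rule emeasure_uniform_quantizer_error[OF assms B])
  also have "\<dots> / emeasure lborel {-\<Delta>/2<..<\<Delta>/2} = emeasure ?U B"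
    using B by (simp add: unif_quant_noise_def Int_commute)
  finally show "emeasure (distr ?U borel ?e) B = emeasure ?U B" .
qed (simp add: unif_quant_noise_def)

definition strictly_causal :: "(nat \<Rightarrow> (nat \<Rightarrow> 'a) \<Rightarrow> 'b) \<Rightarrow> bool" where
  "strictly_causal s \<longleftrightarrow> (\<forall>k \<delta> \<delta>'. (\<forall>j<k. \<delta> j = \<delta>' j) \<longrightarrow> s k \<delta> = s k \<delta>')"

lemma strictly_causalD:
  "strictly_causal s \<Longrightarrow> (\<And>j. j < k \<Longrightarrow> \<delta> j = \<delta>' j) \<Longrightarrow> s k \<delta> = s k \<delta>'"
  unfolding strictly_causal_def by blast

lemma measurable_fun_upd_PiM:
  "(\<lambda>(u, X). X(n := u)) \<in> measurable (N \<Otimes>\<^sub>M PiM (UNIV - {n}) (\<lambda>_. N)) (PiM UNIV (\<lambda>_. N))"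
proof -
  have "(\<lambda>(u, X). X(n := u)) \<in> measurable (N \<Otimes>\<^sub>M PiM (UNIV - {n}) (\<lambda>_. N)) (PiM (insert n (UNIV - {n})) (\<lambda>_. N))"
    by measurable
  then show ?thesis
    by (simp add: insert_absorb)
qed

lemma emeasure_PiM_fiber:
  assumes N: "prob_space N" and E: "E \<in> sets (PiM UNIV (\<lambda>_. N))"
  shows "emeasure (PiM UNIV (\<lambda>_. N)) E =
     (\<integral>\<^sup>+X. emeasure N {u \<in> space N. X(n := u) \<in> E} \<partial>PiM (UNIV - {n}) (\<lambda>_. N))"
proof -
  let ?P = "PiM (UNIV - {n}) (\<lambda>_. N)" and ?upd = "\<lambda>(u, X). X(n := u)"
  interpret N: prob_space N by fact
  interpret P: prob_space ?P by (intro prob_space_PiM N)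
  interpret pair_sigma_finite N ?P ..
  have "distr (N \<Otimes>\<^sub>M ?P) (PiM UNIV (\<lambda>_. N)) ?upd = PiM UNIV (\<lambda>_. N)"
    using distr_pair_PiM_eq_PiM[of "UNIV - {n}" "\<lambda>_. N" n] N by (simp add: insert_absorb)
  then have "emeasure (PiM UNIV (\<lambda>_. N)) E = emeasure (N \<Otimes>\<^sub>M ?P) (?upd -` E \<inter> space (N \<Otimes>\<^sub>M ?P))"
    using E measurable_fun_upd_PiM by (metis emeasure_distr)
  also have "\<dots> = (\<integral>\<^sup>+X. emeasure N ((\<lambda>u. (u, X)) -` (?upd -` E \<inter> space (N \<Otimes>\<^sub>M ?P))) \<partial>?P)"
    by (intro emeasure_pair_measure_alt2 measurable_sets[OF measurable_fun_upd_PiM E])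
  also have "\<dots> = (\<integral>\<^sup>+X. emeasure N {u \<in> space N. X(n := u) \<in> E} \<partial>?P)"
    by (intro nn_integral_cong arg_cong2[where f=emeasure]) (auto simp: space_pair_measure)
  finally show ?thesis .
qed

lemma emeasure_PiM_fiber_indicator:
  assumes N: "prob_space N" and E: "E \<in> sets (PiM UNIV (\<lambda>_. N))" and T: "T \<in> sets (PiM (UNIV - {n}) (\<lambda>_. N))"
    and fiber: "\<And>X. X \<in> space (PiM (UNIV - {n}) (\<lambda>_. N)) \<Longrightarrow>
      emeasure N {u \<in> space N. X(n := u) \<in> E} = p * indicator T X"
  shows "emeasure (PiM UNIV (\<lambda>_. N)) E = p * emeasure (PiM (UNIV - {n}) (\<lambda>_. N)) T"
proof -
  have "emeasure (PiM UNIV (\<lambda>_. N)) E = (\<integral>\<^sup>+X. p * indicator T X \<partial>PiM (UNIV - {n}) (\<lambda>_. N))"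
    unfolding emeasure_PiM_fiber[OF N E, of n] by (intro nn_integral_cong fiber)
  also have "\<dots> = p * emeasure (PiM (UNIV - {n}) (\<lambda>_. N)) T"
    using T by (simp add: nn_integral_cmult_indicator)
  finally show ?thesis .
qed

lemma emeasure_PiM_causal_step:
  fixes N :: "real measure" and \<phi> :: "real \<Rightarrow> real \<Rightarrow> real" and c :: "(nat \<Rightarrow> real) \<Rightarrow> real"
  assumes N: "prob_space N" "sets N = sets borel"
    and \<phi>[measurable]: "(\<lambda>(a, u). \<phi> a u) \<in> borel_measurable (borel \<Otimes>\<^sub>M borel)"
    and \<phi>_preserving: "\<And>a. distr N borel (\<phi> a) = N"
    and S: "S \<in> sets (PiM UNIV (\<lambda>_. N))"
    and S_dep: "\<And>\<delta> \<delta>'. (\<And>j. j < n \<Longrightarrow> \<delta> j = \<delta>' j) \<Longrightarrow> \<delta> \<in> S \<longleftrightarrow> \<delta>' \<in> S"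
    and c[measurable]: "c \<in> borel_measurable (PiM UNIV (\<lambda>_. N))"
    and c_dep: "\<And>\<delta> \<delta>'. (\<And>j. j < n \<Longrightarrow> \<delta> j = \<delta>' j) \<Longrightarrow> c \<delta> = c \<delta>'"
    and B: "B \<in> sets borel"
  shows "emeasure (PiM UNIV (\<lambda>_. N)) {\<delta> \<in> S. \<phi> (c \<delta>) (\<delta> n) \<in> B}
       = emeasure (PiM UNIV (\<lambda>_. N)) S * emeasure N B"
proof -
  let ?PN = "PiM UNIV (\<lambda>_. N)" and ?P = "PiM (UNIV - {n}) (\<lambda>_. N)"
  interpret N: prob_space N by fact
  have [measurable_cong]: "sets N = sets borel" by (fact N(2))
  have space_N: "space N = UNIV"
    using sets_eq_imp_space_eq[OF N(2)] by simp
  define T where "T = (\<lambda>X. X(n := 0)) -` S \<inter> space ?P"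
  have "(\<lambda>X. X(n := 0)) \<in> measurable ?P ?PN"
    using measurable_compose[OF _ measurable_fun_upd_PiM, of "\<lambda>X. (0, X)" ?P N n]
    by (simp add: space_N)
  then have T: "T \<in> sets ?P"
    unfolding T_def using S by (rule measurable_sets)
  have fiber: "emeasure ?PN {\<delta> \<in> S. \<phi> (c \<delta>) (\<delta> n) \<in> B'} = emeasure N B' * emeasure ?P T"
    if B': "B' \<in> sets borel" for B'
  proof (rule emeasure_PiM_fiber_indicator[OF N(1) _ T])
    have "{\<delta> \<in> S. \<phi> (c \<delta>) (\<delta> n) \<in> B'} = S \<inter> {\<delta> \<in> space ?PN. \<phi> (c \<delta>) (\<delta> n) \<in> B'}"
      using sets.sets_into_space[OF S] by auto
    also have "\<dots> \<in> sets ?PN"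
      using S B' by measurable
    finally show "{\<delta> \<in> S. \<phi> (c \<delta>) (\<delta> n) \<in> B'} \<in> sets ?PN" .
  next
    fix X assume X: "X \<in> space ?P"
    define a where "a = c (X(n := 0))"
    have S_fiber: "X(n := u) \<in> S \<longleftrightarrow> X(n := 0) \<in> S" for u
      by (rule S_dep) simp
    have c_fiber: "c (X(n := u)) = a" for u
      unfolding a_def by (rule c_dep) simp
    show "emeasure N {u \<in> space N. X(n := u) \<in> {\<delta> \<in> S. \<phi> (c \<delta>) (\<delta> n) \<in> B'}}
        = emeasure N B' * indicator T X"
    proof (cases "X(n := 0) \<in> S")
      case True
      then have "{u \<in> space N. X(n := u) \<in> {\<delta> \<in> S. \<phi> (c \<delta>) (\<delta> n) \<in> B'}} = \<phi> a -` B' \<inter> space N"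
        using S_fiber by (auto simp: c_fiber)
      moreover have "emeasure N (\<phi> a -` B' \<inter> space N) = emeasure N B'"
        using B' emeasure_distr[of "\<phi> a" N borel B'] by (simp add: \<phi>_preserving)
      ultimately show ?thesis
        using True X by (simp add: T_def)
    next
      case False
      then have "{u \<in> space N. X(n := u) \<in> {\<delta> \<in> S. \<phi> (c \<delta>) (\<delta> n) \<in> B'}} = {}"
        using S_fiber by blast
      then show ?thesis
        using False X by (simp only: T_def) simp
    qed
  qed
  have "emeasure ?PN S = emeasure ?P T"
    using fiber[of UNIV] N.emeasure_space_1 by (simp add: space_N)
  with fiber[OF B] show ?thesis
    by (simp add: mult.commute)
qed

lemma emeasure_PiM_causal_cylinder:
  fixes N :: "real measure" and \<phi> :: "real \<Rightarrow> real \<Rightarrow> real" and s :: "nat \<Rightarrow> (nat \<Rightarrow> real) \<Rightarrow> real"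
  assumes N: "prob_space N" "sets N = sets borel"
    and \<phi>[measurable]: "(\<lambda>(a, u). \<phi> a u) \<in> borel_measurable (borel \<Otimes>\<^sub>M borel)"
    and \<phi>_preserving: "\<And>a. distr N borel (\<phi> a) = N"
    and s[measurable]: "\<And>k. s k \<in> borel_measurable (PiM UNIV (\<lambda>_. N))"
    and s_causal: "strictly_causal s"
    and B: "\<And>j. B j \<in> sets borel"
  shows "emeasure (PiM UNIV (\<lambda>_. N)) {\<delta> \<in> space (PiM UNIV (\<lambda>_. N)). \<forall>j<n. \<phi> (s j \<delta>) (\<delta> j) \<in> B j}
       = (\<Prod>j<n. emeasure N (B j))"
proof (induction n)
  case 0
  show ?case
    using prob_space.emeasure_space_1[OF prob_space_PiM[OF N(1)]] by simp
next
  case (Suc n)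
  let ?PN = "PiM UNIV (\<lambda>_. N)"
  let ?S = "{\<delta> \<in> space ?PN. \<forall>j<n. \<phi> (s j \<delta>) (\<delta> j) \<in> B j}"
  have [measurable_cong]: "sets N = sets borel" by (fact N(2))
  have "{\<delta> \<in> space ?PN. \<forall>j<Suc n. \<phi> (s j \<delta>) (\<delta> j) \<in> B j} = {\<delta> \<in> ?S. \<phi> (s n \<delta>) (\<delta> n) \<in> B n}"
    by (auto simp: less_Suc_eq)
  also have "emeasure ?PN \<dots> = emeasure ?PN ?S * emeasure N (B n)"
  proof (rule emeasure_PiM_causal_step[OF N \<phi> \<phi>_preserving _ _ s _ B])
    show "?S \<in> sets ?PN"
      using B by measurable
    show "\<delta> \<in> ?S \<longleftrightarrow> \<delta>' \<in> ?S" if "\<And>j. j < n \<Longrightarrow> \<delta> j = \<delta>' j" for \<delta> \<delta>'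
    proof -
      have space_PN: "space ?PN = UNIV"
        using sets_eq_imp_space_eq[OF N(2)] by (simp add: space_PiM)
      show ?thesis
        using that strictly_causalD[OF s_causal, of _ \<delta> \<delta>'] by (simp add: space_PN)
    qed
    show "s n \<delta> = s n \<delta>'" if "\<And>j. j < n \<Longrightarrow> \<delta> j = \<delta>' j" for \<delta> \<delta>'
      using strictly_causalD[OF s_causal that] .
  qed
  finally show ?case
    using Suc by simp
qed

lemma distr_PiM_causal_transform:
  fixes N :: "real measure" and \<phi> :: "real \<Rightarrow> real \<Rightarrow> real" and s :: "nat \<Rightarrow> (nat \<Rightarrow> real) \<Rightarrow> real"
  assumes N: "prob_space N" "sets N = sets borel"
    and \<phi>[measurable]: "(\<lambda>(a, u). \<phi> a u) \<in> borel_measurable (borel \<Otimes>\<^sub>M borel)"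
    and \<phi>_preserving: "\<And>a. distr N borel (\<phi> a) = N"
    and s[measurable]: "\<And>k. s k \<in> borel_measurable (PiM UNIV (\<lambda>_. N))"
    and s_causal: "strictly_causal s"
  shows "distr (PiM UNIV (\<lambda>_. N)) (PiM UNIV (\<lambda>_. N)) (\<lambda>\<delta> k. \<phi> (s k \<delta>) (\<delta> k)) = PiM UNIV (\<lambda>_. N)"
proof (rule measure_eqI_PiM_infinite)
  let ?PN = "PiM UNIV (\<lambda>_. N)" and ?G = "\<lambda>\<delta> k. \<phi> (s k \<delta>) (\<delta> k)"
  interpret N: prob_space N by fact
  interpret PN: prob_space ?PN by (intro prob_space_PiM N)
  have [measurable_cong]: "sets N = sets borel" by (fact N(2))
  have space_N: "space N = UNIV"
    using sets_eq_imp_space_eq[OF N(2)] by simp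
  have G: "?G \<in> measurable ?PN ?PN"
    by (rule measurable_PiM_single') (auto simp: space_N)
  then show "finite_measure (distr ?PN ?PN ?G)"
    using PN.prob_space_distr[OF G] by (simp add: prob_space_def)
  fix J :: "nat set" and A assume J: "finite J" and A: "\<And>i. i \<in> J \<Longrightarrow> A i \<in> sets N"
  obtain n where n: "J \<subseteq> {..<n}"
    using finite_nat_bounded[OF J] by auto
  define B where "B j = (if j \<in> J then A j else UNIV)" for j
  have B: "B j \<in> sets borel" for j
    using A by (auto simp: B_def N(2)[symmetric])
  have "?G -` prod_emb UNIV (\<lambda>_. N) J (Pi\<^sub>E J A) \<inter> space ?PN = {\<delta> \<in> space ?PN. \<forall>j<n. ?G \<delta> j \<in> B j}"
    using n by (auto simp: prod_emb_def space_PiM space_N B_def PiE_iff subset_eq)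
  then have "emeasure (distr ?PN ?PN ?G) (prod_emb UNIV (\<lambda>_. N) J (Pi\<^sub>E J A)) = (\<Prod>j<n. emeasure N (B j))"
    using J A G emeasure_PiM_causal_cylinder[OF N \<phi> \<phi>_preserving s s_causal B]
    by (simp add: emeasure_distr sets_PiM_I)
  also have "\<dots> = (\<Prod>j\<in>J. emeasure N (A j))"
    using n by (intro prod.mono_neutral_cong_right) (auto simp: B_def N.emeasure_space_1[unfolded space_N])
  also have "\<dots> = emeasure ?PN (prod_emb UNIV (\<lambda>_. N) J (Pi\<^sub>E J A))"
    using J A N(1) by (intro emeasure_PiM_emb[symmetric]) auto
  finally show "emeasure (distr ?PN ?PN ?G) (prod_emb UNIV (\<lambda>_. N) J (Pi\<^sub>E J A))
      = emeasure ?PN (prod_emb UNIV (\<lambda>_. N) J (Pi\<^sub>E J A))" .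
qed simp_all

lemma distr_pair_measure_fiberwise:
  assumes M1: "sigma_finite_measure M1" and M2: "sigma_finite_measure M2"
    and F: "F \<in> measurable (M1 \<Otimes>\<^sub>M M2) M1"
    and F_preserving: "\<And>\<xi>. \<xi> \<in> space M2 \<Longrightarrow> distr M1 M1 (\<lambda>\<delta>. F (\<delta>, \<xi>)) = M1"
  shows "distr (M1 \<Otimes>\<^sub>M M2) (M1 \<Otimes>\<^sub>M M2) (\<lambda>p. (F p, snd p)) = M1 \<Otimes>\<^sub>M M2"
proof (rule measure_eqI)
  interpret pair_sigma_finite M1 M2
    using M1 M2 by (rule pair_sigma_finite.intro)
  let ?H = "\<lambda>p. (F p, snd p)"
  have H: "?H \<in> measurable (M1 \<Otimes>\<^sub>M M2) (M1 \<Otimes>\<^sub>M M2)"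
    using F by measurable
  fix A assume "A \<in> sets (distr (M1 \<Otimes>\<^sub>M M2) (M1 \<Otimes>\<^sub>M M2) ?H)"
  then have A: "A \<in> sets (M1 \<Otimes>\<^sub>M M2)" by simp
  have "emeasure (distr (M1 \<Otimes>\<^sub>M M2) (M1 \<Otimes>\<^sub>M M2) ?H) A
      = emeasure (M1 \<Otimes>\<^sub>M M2) (?H -` A \<inter> space (M1 \<Otimes>\<^sub>M M2))"
    by (rule emeasure_distr[OF H A])
  also have "\<dots> = (\<integral>\<^sup>+\<xi>. emeasure M1 ((\<lambda>x. (x, \<xi>)) -` (?H -` A \<inter> space (M1 \<Otimes>\<^sub>M M2))) \<partial>M2)"
    by (intro emeasure_pair_measure_alt2 measurable_sets[OF H A])
  also have "\<dots> = (\<integral>\<^sup>+\<xi>. emeasure M1 ((\<lambda>x. (x, \<xi>)) -` A) \<partial>M2)"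
  proof (intro nn_integral_cong)
    fix \<xi> assume \<xi>: "\<xi> \<in> space M2"
    have Pair: "(\<lambda>x. (x, \<xi>)) \<in> measurable M1 (M1 \<Otimes>\<^sub>M M2)"
      using \<xi> by measurable
    have F\<xi>: "(\<lambda>\<delta>. F (\<delta>, \<xi>)) \<in> measurable M1 M1"
      using measurable_compose[OF Pair F] by (simp add: comp_def)
    have "(\<lambda>x. (x, \<xi>)) -` (?H -` A \<inter> space (M1 \<Otimes>\<^sub>M M2))
        = (\<lambda>\<delta>. F (\<delta>, \<xi>)) -` ((\<lambda>x. (x, \<xi>)) -` A \<inter> space M1) \<inter> space M1"
      using \<xi> measurable_space[OF F\<xi>] by (auto simp: space_pair_measure)
    also have "emeasure M1 \<dots> = emeasure (distr M1 M1 (\<lambda>\<delta>. F (\<delta>, \<xi>))) ((\<lambda>x. (x, \<xi>)) -` A \<inter> space M1)"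
      using measurable_sets[OF Pair A] F\<xi> by (simp add: emeasure_distr)
    also have "\<dots> = emeasure M1 ((\<lambda>x. (x, \<xi>)) -` A \<inter> space M1)"
      by (simp only: F_preserving[OF \<xi>])
    also have "(\<lambda>x. (x, \<xi>)) -` A \<inter> space M1 = (\<lambda>x. (x, \<xi>)) -` A"
      using sets.sets_into_space[OF A] by (auto simp: space_pair_measure)
    finally show "emeasure M1 ((\<lambda>x. (x, \<xi>)) -` (?H -` A \<inter> space (M1 \<Otimes>\<^sub>M M2)))
        = emeasure M1 ((\<lambda>x. (x, \<xi>)) -` A)" .
  qed
  also have "\<dots> = emeasure (M1 \<Otimes>\<^sub>M M2) A"
    by (rule emeasure_pair_measure_alt2[OF A, symmetric])
  finally show "emeasure (distr (M1 \<Otimes>\<^sub>M M2) (M1 \<Otimes>\<^sub>M M2) ?H) A = emeasure (M1 \<Otimes>\<^sub>M M2) A" .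
qed simp

lemma indep_rv_iff_prob_Int:
  assumes M: "prob_space M" and X: "X \<in> measurable M S" and Y: "Y \<in> measurable M T"
  shows "indep_rv M S X T Y \<longleftrightarrow> (\<forall>A\<in>sets S. \<forall>B\<in>sets T.
     measure M ((X -` A \<inter> space M) \<inter> (Y -` B \<inter> space M))
       = measure M (X -` A \<inter> space M) * measure M (Y -` B \<inter> space M))"
    (is "_ \<longleftrightarrow> ?product")
proof -
  interpret prob_space M by fact
  let ?GX = "{X -` A \<inter> space M | A. A \<in> sets S}" and ?GY = "{Y -` B \<inter> space M | B. B \<in> sets T}"
  have Int_stable: "Int_stable {Z -` A \<inter> space M | A. A \<in> sets R}" for Z :: "'a \<Rightarrow> 'z" and R
  proof (safe intro!: Int_stableI)
    fix A B assume "A \<in> sets R" "B \<in> sets R"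
    then show "\<exists>C. (Z -` A \<inter> space M) \<inter> (Z -` B \<inter> space M) = Z -` C \<inter> space M \<and> C \<in> sets R"
      by (intro exI[of _ "A \<inter> B"]) auto
  qed
  have events: "?GX \<subseteq> events" "?GY \<subseteq> events"
    using X Y by (auto intro: measurable_sets)
  have "indep_rv M S X T Y \<longleftrightarrow> indep_set (sigma_sets (space M) ?GX) (sigma_sets (space M) ?GY)"
    using X Y by (simp add: indep_rv_def)
  also have "\<dots> \<longleftrightarrow> indep_set ?GX ?GY"
  proof
    assume "indep_set (sigma_sets (space M) ?GX) (sigma_sets (space M) ?GY)"
    then show "indep_set ?GX ?GY"
      using events by (auto simp: indep_sets2_eq intro: sigma_sets.Basic)
  qed (intro indep_set_sigma_sets Int_stable)
  also have "\<dots> \<longleftrightarrow> ?product"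
    unfolding indep_sets2_eq using events by blast
  finally show ?thesis .
qed

lemma indep_rv_iff_distr_pair:
  assumes M: "prob_space M" and X: "X \<in> measurable M S" and Y: "Y \<in> measurable M T"
  shows "indep_rv M S X T Y \<longleftrightarrow>
    distr M S X \<Otimes>\<^sub>M distr M T Y = distr M (S \<Otimes>\<^sub>M T) (\<lambda>\<omega>. (X \<omega>, Y \<omega>))"
proof -
  interpret M: prob_space M by fact
  let ?PX = "distr M S X" and ?PY = "distr M T Y" and ?J = "distr M (S \<Otimes>\<^sub>M T) (\<lambda>\<omega>. (X \<omega>, Y \<omega>))"
  interpret PX: prob_space ?PX by (rule M.prob_space_distr) fact
  interpret PY: prob_space ?PY by (rule M.prob_space_distr) fact
  have XY: "(\<lambda>\<omega>. (X \<omega>, Y \<omega>)) \<in> measurable M (S \<Otimes>\<^sub>M T)"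
    using X Y by (rule measurable_Pair)
  have rectangle: "emeasure ?J (A \<times> B) = measure M ((X -` A \<inter> space M) \<inter> (Y -` B \<inter> space M))"
    and product: "emeasure (?PX \<Otimes>\<^sub>M ?PY) (A \<times> B) = measure M (X -` A \<inter> space M) * measure M (Y -` B \<inter> space M)"
    if "A \<in> sets S" "B \<in> sets T" for A B
  proof -
    have "(\<lambda>\<omega>. (X \<omega>, Y \<omega>)) -` (A \<times> B) \<inter> space M = (X -` A \<inter> space M) \<inter> (Y -` B \<inter> space M)"
      by auto
    then show "emeasure ?J (A \<times> B) = measure M ((X -` A \<inter> space M) \<inter> (Y -` B \<inter> space M))"
      using that XY by (simp add: emeasure_distr M.emeasure_eq_measure)
    show "emeasure (?PX \<Otimes>\<^sub>M ?PY) (A \<times> B) = measure M (X -` A \<inter> space M) * measure M (Y -` B \<inter> space M)"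
    proof -
      have "emeasure (?PX \<Otimes>\<^sub>M ?PY) (A \<times> B) = emeasure ?PX A * emeasure ?PY B"
        using that by (intro PY.emeasure_pair_measure_Times) simp_all
      then show ?thesis
        using that X Y by (simp add: emeasure_distr M.emeasure_eq_measure ennreal_mult)
    qed
  qed
  have "?PX \<Otimes>\<^sub>M ?PY = ?J \<longleftrightarrow>
      (\<forall>A\<in>sets S. \<forall>B\<in>sets T. emeasure (?PX \<Otimes>\<^sub>M ?PY) (A \<times> B) = emeasure ?J (A \<times> B))"
  proof
    assume "\<forall>A\<in>sets S. \<forall>B\<in>sets T. emeasure (?PX \<Otimes>\<^sub>M ?PY) (A \<times> B) = emeasure ?J (A \<times> B)"
    then show "?PX \<Otimes>\<^sub>M ?PY = ?J"
      by (intro pair_measure_eqI PX.sigma_finite_measure_axioms PY.sigma_finite_measure_axioms) (auto simp: PY.emeasure_pair_measure_Times)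
  qed simp
  also have "\<dots> \<longleftrightarrow> indep_rv M S X T Y"
    unfolding indep_rv_iff_prob_Int[OF M X Y] by (auto simp: rectangle product measure_nonneg)
  finally show ?thesis ..
qed

lemma indep_rv_cong_sets:
  assumes "sets S' = sets S" "sets T' = sets T"
  shows "indep_rv M S' X T' Y \<longleftrightarrow> indep_rv M S X T Y"
proof -
  have "measurable M S' = measurable M S"
    by (rule measurable_cong_sets[OF refl assms(1)])
  moreover have "measurable M T' = measurable M T"
    by (rule measurable_cong_sets[OF refl assms(2)])
  ultimately show ?thesis
    using assms by (simp add: indep_rv_def)
qed

lemma distr_lborel_eq_borel: "distr M lborel f = distr M borel f"
  by (rule distr_cong) simp_all

lemma iid_iff_distr_PiM:
  fixes X :: "nat \<Rightarrow> 'a \<Rightarrow> real" and N :: "real measure"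
  assumes M: "prob_space M" and N: "prob_space N" "sets N = sets borel"
    and X: "\<And>k. X k \<in> borel_measurable M"
  shows "prob_space.indep_vars M (\<lambda>_. borel) X UNIV \<and> (\<forall>k. distr M borel (X k) = N)
     \<longleftrightarrow> distr M (PiM UNIV (\<lambda>_. N)) (\<lambda>\<omega> k. X k \<omega>) = PiM UNIV (\<lambda>_. N)"
proof -
  interpret prob_space M by fact
  have sets_PiM: "sets (PiM UNIV (\<lambda>_. N)) = sets (PiM UNIV (\<lambda>_. borel))"
    using N(2) by (intro sets_PiM_cong) simp_all
  have X_PiM: "(\<lambda>\<omega> k. X k \<omega>) \<in> measurable M (PiM UNIV (\<lambda>_. N))"
    using X by (simp add: measurable_cong_sets[OF refl sets_PiM] measurable_PiM_single')
  have distr_eq: "distr M (PiM UNIV (\<lambda>_. N)) (\<lambda>\<omega> k. X k \<omega>) = distr M (PiM UNIV (\<lambda>_. borel)) (\<lambda>\<omega>. \<lambda>k\<in>UNIV. X k \<omega>)"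
    using sets_PiM by (intro distr_cong) (simp_all add: restrict_UNIV)
  have marginal: "distr M borel (X k) = N"
    if "distr M (PiM UNIV (\<lambda>_. N)) (\<lambda>\<omega> k. X k \<omega>) = PiM UNIV (\<lambda>_. N)" for k
  proof -
    have "(\<lambda>\<delta>. \<delta> k) \<in> borel_measurable (PiM UNIV (\<lambda>_. N))"
      using measurable_component_singleton[of k UNIV "\<lambda>_. N"] by (simp add: measurable_cong_sets[OF refl N(2)])
    then have "distr M borel (X k) = distr (distr M (PiM UNIV (\<lambda>_. N)) (\<lambda>\<omega> k. X k \<omega>)) borel (\<lambda>\<delta>. \<delta> k)"
      using X_PiM by (subst distr_distr) (auto simp: comp_def)
    also have "\<dots> = distr (PiM UNIV (\<lambda>_. N)) N (\<lambda>\<delta>. \<delta> k)"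
      unfolding that using N(2) by (intro distr_cong) simp_all
    also have "\<dots> = N"
      using N(1) by (intro distr_PiM_component) simp_all
    finally show ?thesis .
  qed
  have "indep_vars (\<lambda>_. borel) X UNIV \<longleftrightarrow>
      distr M (PiM UNIV (\<lambda>_. N)) (\<lambda>\<omega> k. X k \<omega>) = PiM UNIV (\<lambda>k. distr M borel (X k))"
    unfolding distr_eq using X by (intro indep_vars_iff_distr_eq_PiM) simp_all
  with marginal show ?thesis
    by auto
qed

lemma indep_rv_fiberwise_transform:
  assumes M: "prob_space M" and N: "prob_space N"
    and D_distr: "distr M N D = N" and D_\<Xi>: "indep_rv M N D S \<Xi>"
    and F: "F \<in> measurable (N \<Otimes>\<^sub>M S) N"
    and F_preserving: "\<And>\<xi>. \<xi> \<in> space S \<Longrightarrow> distr N N (\<lambda>\<delta>. F (\<delta>, \<xi>)) = N"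
  shows "distr M N (\<lambda>\<omega>. F (D \<omega>, \<Xi> \<omega>)) = N" and "indep_rv M N (\<lambda>\<omega>. F (D \<omega>, \<Xi> \<omega>)) S \<Xi>"
proof -
  interpret prob_space M by fact
  interpret N: prob_space N by fact
  let ?P\<Xi> = "distr M S \<Xi>" and ?H = "\<lambda>p. (F p, snd p)"
  have D: "random_variable N D" and \<Xi>: "random_variable S \<Xi>"
    using D_\<Xi> by (simp_all add: indep_rv_def)
  interpret P\<Xi>: prob_space ?P\<Xi>
    using \<Xi> by (rule prob_space_distr)
  have E: "random_variable N (\<lambda>\<omega>. F (D \<omega>, \<Xi> \<omega>))"
    using measurable_compose[OF measurable_Pair[OF D \<Xi>] F] by simp
  have H: "?H \<in> measurable (N \<Otimes>\<^sub>M S) (N \<Otimes>\<^sub>M S)"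
    using F by measurable
  have "distr M (N \<Otimes>\<^sub>M S) (\<lambda>\<omega>. (F (D \<omega>, \<Xi> \<omega>), \<Xi> \<omega>))
      = distr (distr M (N \<Otimes>\<^sub>M S) (\<lambda>\<omega>. (D \<omega>, \<Xi> \<omega>))) (N \<Otimes>\<^sub>M S) ?H"
    using H D \<Xi> by (simp add: distr_distr comp_def)
  also have "\<dots> = distr (N \<Otimes>\<^sub>M ?P\<Xi>) (N \<Otimes>\<^sub>M ?P\<Xi>) ?H"
    using D_\<Xi> D_distr unfolding indep_rv_iff_distr_pair[OF M D \<Xi>]
    by (intro distr_cong sets_pair_measure_cong) simp_all
  also have "\<dots> = N \<Otimes>\<^sub>M ?P\<Xi>"
  proof (rule distr_pair_measure_fiberwise)
    show "F \<in> measurable (N \<Otimes>\<^sub>M ?P\<Xi>) N"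
      using F by (simp add: measurable_cong_sets[OF sets_pair_measure_cong[OF refl sets_distr] refl])
  qed (simp_all add: F_preserving N.sigma_finite_measure_axioms P\<Xi>.sigma_finite_measure_axioms)
  finally have joint: "distr M (N \<Otimes>\<^sub>M S) (\<lambda>\<omega>. (F (D \<omega>, \<Xi> \<omega>), \<Xi> \<omega>)) = N \<Otimes>\<^sub>M ?P\<Xi>" .
  have "distr M N (\<lambda>\<omega>. F (D \<omega>, \<Xi> \<omega>)) = distr (distr M (N \<Otimes>\<^sub>M S) (\<lambda>\<omega>. (F (D \<omega>, \<Xi> \<omega>), \<Xi> \<omega>))) N fst"
    using E \<Xi> by (simp add: distr_distr comp_def)
  also have "\<dots> = N"
    unfolding joint by (rule P\<Xi>.distr_pair_fst)
  finally show marginal: "distr M N (\<lambda>\<omega>. F (D \<omega>, \<Xi> \<omega>)) = N" .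
  show "indep_rv M N (\<lambda>\<omega>. F (D \<omega>, \<Xi> \<omega>)) S \<Xi>"
    using marginal joint by (simp add: indep_rv_iff_distr_pair[OF M E \<Xi>])
qed

lemma causal_innovations_distr_indep:
  fixes M :: "'a measure" and N :: "real measure" and S :: "'b measure"
    and D :: "'a \<Rightarrow> nat \<Rightarrow> real" and \<Xi> :: "'a \<Rightarrow> 'b"
    and s :: "'b \<Rightarrow> nat \<Rightarrow> (nat \<Rightarrow> real) \<Rightarrow> real" and \<phi> :: "real \<Rightarrow> real \<Rightarrow> real"
  assumes M: "prob_space M" and N: "prob_space N" "sets N = sets borel"
    and \<phi>[measurable]: "(\<lambda>(a, u). \<phi> a u) \<in> borel_measurable (borel \<Otimes>\<^sub>M borel)"
    and \<phi>_preserving: "\<And>a. distr N borel (\<phi> a) = N"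
    and D_distr: "distr M (PiM UNIV (\<lambda>_. N)) D = PiM UNIV (\<lambda>_. N)"
    and D_\<Xi>: "indep_rv M (PiM UNIV (\<lambda>_. N)) D S \<Xi>"
    and s: "\<And>k. (\<lambda>(\<delta>, \<xi>). s \<xi> k \<delta>) \<in> borel_measurable (PiM UNIV (\<lambda>_. N) \<Otimes>\<^sub>M S)"
    and s_causal: "\<And>\<xi>. strictly_causal (s \<xi>)"
  shows "distr M (PiM UNIV (\<lambda>_. N)) (\<lambda>\<omega> k. \<phi> (s (\<Xi> \<omega>) k (D \<omega>)) (D \<omega> k)) = PiM UNIV (\<lambda>_. N)"
    and "indep_rv M (PiM UNIV (\<lambda>_. N)) (\<lambda>\<omega> k. \<phi> (s (\<Xi> \<omega>) k (D \<omega>)) (D \<omega> k)) S \<Xi>"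
proof -
  let ?PN = "PiM UNIV (\<lambda>_. N)" and ?F = "\<lambda>p k. \<phi> (s (snd p) k (fst p)) (fst p k)"
  have [measurable_cong]: "sets N = sets borel" by (fact N(2))
  have [measurable]: "(\<lambda>p. s (snd p) k (fst p)) \<in> borel_measurable (?PN \<Otimes>\<^sub>M S)" for k
    using s[of k] by (simp add: case_prod_beta')
  have F: "?F \<in> measurable (?PN \<Otimes>\<^sub>M S) ?PN"
    using sets_eq_imp_space_eq[OF N(2)] by (intro measurable_PiM_single') auto
  have "distr ?PN ?PN (\<lambda>\<delta>. ?F (\<delta>, \<xi>)) = ?PN" if "\<xi> \<in> space S" for \<xi>
  proof -
    have "(\<lambda>\<delta>. s \<xi> k \<delta>) \<in> borel_measurable ?PN" for k
      using measurable_compose[OF measurable_Pair[OF measurable_ident_sets[OF refl] measurable_const[of \<xi>]] s[of k]] that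
      by (simp add: comp_def)
    then show ?thesis
      using distr_PiM_causal_transform[OF N \<phi> \<phi>_preserving _ s_causal] by simp
  qed
  then show "distr M ?PN (\<lambda>\<omega> k. \<phi> (s (\<Xi> \<omega>) k (D \<omega>)) (D \<omega> k)) = ?PN"
    and "indep_rv M ?PN (\<lambda>\<omega> k. \<phi> (s (\<Xi> \<omega>) k (D \<omega>)) (D \<omega> k)) S \<Xi>"
    using indep_rv_fiberwise_transform[OF M prob_space_PiM[OF N(1)] D_distr D_\<Xi> F] by simp_all
qed

lemma causal_innovations_iid_indep:
  fixes M :: "'a measure" and N :: "real measure" and S :: "'b measure"
    and D :: "nat \<Rightarrow> 'a \<Rightarrow> real" and \<Xi> :: "'a \<Rightarrow> 'b"
    and s :: "'b \<Rightarrow> nat \<Rightarrow> (nat \<Rightarrow> real) \<Rightarrow> real" and \<phi> :: "real \<Rightarrow> real \<Rightarrow> real"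
  assumes M: "prob_space M" and N: "prob_space N" "sets N = sets borel"
    and \<phi>: "(\<lambda>(a, u). \<phi> a u) \<in> borel_measurable (borel \<Otimes>\<^sub>M borel)"
    and \<phi>_preserving: "\<And>a. distr N borel (\<phi> a) = N"
    and D_measurable: "\<And>k. D k \<in> borel_measurable M"
    and D_indep: "prob_space.indep_vars M (\<lambda>_. borel) D UNIV"
    and D_distr: "\<And>k. distr M borel (D k) = N"
    and D_\<Xi>: "indep_rv M (PiM UNIV (\<lambda>_. borel)) (\<lambda>\<omega> k. D k \<omega>) S \<Xi>"
    and s: "\<And>k. (\<lambda>(\<delta>, \<xi>). s \<xi> k \<delta>) \<in> borel_measurable (PiM UNIV (\<lambda>_. borel) \<Otimes>\<^sub>M S)"
    and s_causal: "\<And>\<xi>. strictly_causal (s \<xi>)"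
  defines "E \<equiv> \<lambda>k \<omega>. \<phi> (s (\<Xi> \<omega>) k (\<lambda>j. D j \<omega>)) (D k \<omega>)"
  shows "prob_space.indep_vars M (\<lambda>_. borel) E UNIV"
    and "\<And>k. distr M borel (E k) = N"
    and "indep_rv M (PiM UNIV (\<lambda>_. borel)) (\<lambda>\<omega> k. E k \<omega>) S \<Xi>"
proof -
  let ?PN = "PiM UNIV (\<lambda>_. N)" and ?PB = "PiM UNIV (\<lambda>_. borel :: real measure)"
  have sets_PN: "sets ?PN = sets ?PB"
    using N(2) by (intro sets_PiM_cong) simp_all
  have "distr M ?PN (\<lambda>\<omega> k. D k \<omega>) = ?PN"
    using iid_iff_distr_PiM[OF M N D_measurable] D_indep D_distr by simp
  moreover have "indep_rv M ?PN (\<lambda>\<omega> k. D k \<omega>) S \<Xi>"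
    using D_\<Xi> by (simp add: indep_rv_cong_sets[OF sets_PN refl])
  moreover have "(\<lambda>(\<delta>, \<xi>). s \<xi> k \<delta>) \<in> borel_measurable (?PN \<Otimes>\<^sub>M S)" for k
    using s by (simp add: measurable_cong_sets[OF sets_pair_measure_cong[OF sets_PN refl] refl])
  ultimately have E_distr: "distr M ?PN (\<lambda>\<omega> k. E k \<omega>) = ?PN"
    and E_\<Xi>: "indep_rv M ?PN (\<lambda>\<omega> k. E k \<omega>) S \<Xi>"
    unfolding E_def using causal_innovations_distr_indep[OF M N \<phi> \<phi>_preserving] s_causal by blast+
  have "E k \<in> borel_measurable M" for k
  proof -
    have "(\<lambda>\<delta>. \<delta> k) \<in> borel_measurable ?PN"
      using measurable_component_singleton[of k UNIV "\<lambda>_. N"] by (simp add: measurable_cong_sets[OF refl N(2)])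
    with E_\<Xi> show ?thesis
      unfolding indep_rv_def using measurable_compose by fastforce
  qed
  then show "prob_space.indep_vars M (\<lambda>_. borel) E UNIV" and "\<And>k. distr M borel (E k) = N"
    using iid_iff_distr_PiM[OF M N, of E] E_distr by simp_all
  show "indep_rv M ?PB (\<lambda>\<omega> k. E k \<omega>) S \<Xi>"
    using E_\<Xi> by (simp add: indep_rv_cong_sets[OF sets_PN refl])
qed

lemma borel_measurable_matrix_vector_mult [measurable (raw)]:
  fixes A :: "real^'n^'m"
  shows "f \<in> borel_measurable M \<Longrightarrow> (\<lambda>x. A *v f x) \<in> borel_measurable M"
  using measurable_compose[OF _ borel_measurable_continuous_onI[OF matrix_vector_mult_linear_continuous_on]]
  by blast

context
  fixes A :: "real^'n^'n" and Bw :: "real^'m^'n" and Br :: "real^'n"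
    and Ct :: "real^'n" and Dtw :: "real^'m" and \<Delta> :: real and h :: nat
begin

fun loop_state :: "(nat \<Rightarrow> real^'m) \<times> (real^'n) \<Rightarrow> nat \<Rightarrow> (nat \<Rightarrow> real) \<Rightarrow> real^'n" where
  "loop_state \<xi> 0 \<delta> = snd \<xi>"
| "loop_state \<xi> (Suc k) \<delta> = A *v loop_state \<xi> k \<delta> + Bw *v fst \<xi> k +
     (if h \<le> k then uniform_quantizer \<Delta> (Ct \<bullet> loop_state \<xi> (k - h) \<delta> + Dtw \<bullet> fst \<xi> (k - h) + \<delta> (k - h))
        - \<delta> (k - h) else 0) *\<^sub>R Br"

definition loop_output :: "(nat \<Rightarrow> real^'m) \<times> (real^'n) \<Rightarrow> nat \<Rightarrow> (nat \<Rightarrow> real) \<Rightarrow> real" where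
  "loop_output \<xi> k \<delta> = Ct \<bullet> loop_state \<xi> k \<delta> + Dtw \<bullet> fst \<xi> k"

lemma strictly_causal_loop_state: "strictly_causal (loop_state \<xi>)"
  unfolding strictly_causal_def
proof (intro allI impI)
  fix k and \<delta> \<delta>' :: "nat \<Rightarrow> real"
  assume "\<forall>j<k. \<delta> j = \<delta>' j"
  then show "loop_state \<xi> k \<delta> = loop_state \<xi> k \<delta>'"
  proof (induction k rule: less_induct)
    case (less k)
    show ?case
    proof (cases k)
      case (Suc k')
      have "loop_state \<xi> k' \<delta> = loop_state \<xi> k' \<delta>'"
        using less Suc by simp
      moreover have "loop_state \<xi> (k' - h) \<delta> = loop_state \<xi> (k' - h) \<delta>'" "\<delta> (k' - h) = \<delta>' (k' - h)"
        if "h \<le> k'"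
        using less Suc that by auto
      ultimately show ?thesis
        using Suc by simp
    qed simp
  qed
qed

lemma strictly_causal_loop_output: "strictly_causal (loop_output \<xi>)"
  using strictly_causalD[OF strictly_causal_loop_state] unfolding strictly_causal_def loop_output_def
  by metis

lemma measurable_loop_output:
  assumes [measurable_cong]: "sets N = sets (borel :: real measure)"
  shows "(\<lambda>(\<delta>, \<xi>). loop_output \<xi> k \<delta>)
    \<in> borel_measurable (PiM UNIV (\<lambda>_. N) \<Otimes>\<^sub>M (PiM UNIV (\<lambda>_. borel) \<Otimes>\<^sub>M borel))"
proof -
  have state: "(\<lambda>p. loop_state (snd p) k (fst p))
      \<in> borel_measurable (PiM UNIV (\<lambda>_. N) \<Otimes>\<^sub>M (PiM UNIV (\<lambda>_. borel) \<Otimes>\<^sub>M borel))" for k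
  proof (induction k rule: less_induct)
    case (less k)
    show ?case
    proof (cases k)
      case (Suc k')
      have [measurable]: "(\<lambda>p. loop_state (snd p) j (fst p))
          \<in> borel_measurable (PiM UNIV (\<lambda>_. N) \<Otimes>\<^sub>M (PiM UNIV (\<lambda>_. borel) \<Otimes>\<^sub>M borel))"
        if "j \<le> k'" for j
        using less Suc that by simp
      show ?thesis
        unfolding Suc loop_state.simps by measurable
    qed simp
  qed
  show ?thesis
    unfolding loop_output_def case_prod_beta' using state[measurable] by measurable
qed

lemma closed_loop_output:
  assumes "x 0 = x0"
    and "\<And>k. x (Suc k) = A *v x k + Bw *v w k + rh k *\<^sub>R Br"
    and "\<And>k. t k = Ct \<bullet> x k + Dtw \<bullet> w k"
    and "\<And>k. r k = uniform_quantizer \<Delta> (t k + d k) - d k"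
    and "\<And>k. rh k = (if h \<le> k then r (k - h) else 0)"
  shows "t k = loop_output (w, x0) k d"
proof -
  have "x k = loop_state (w, x0) k d" for k
  proof (induction k rule: less_induct)
    case (less k)
    then show ?case
      using assms by (cases k) simp_all
  qed
  then show ?thesis
    using assms(3) by (simp add: loop_output_def)
qed

end

theorem lemma6:
  fixes M :: "'a measure"
    and A :: "real^'n^'n" and Bw :: "real^'m^'n" and Br :: "real^'n"
    and Ct :: "real^'n" and Dtw :: "real^'m"
    and Cz :: "real^'n^'p" and Dzw :: "real^'m^'p" and Dzr :: "real^'p"
    and \<Delta> :: real and h :: nat
    and w :: "nat \<Rightarrow> 'a \<Rightarrow> real^'m" and x0 :: "'a \<Rightarrow> real^'n" and d :: "nat \<Rightarrow> 'a \<Rightarrow> real"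
    and x :: "nat \<Rightarrow> 'a \<Rightarrow> real^'n" and z :: "nat \<Rightarrow> 'a \<Rightarrow> real^'p"
    and t r rh :: "nat \<Rightarrow> 'a \<Rightarrow> real"
  assumes M: "prob_space M"
    and \<Delta>: "0 < \<Delta>"
    \<comment> \<open>white noise input, jointly second order with the initial state\<close>
    and w_white: "white_noise M w"
    and x0_so: "second_order M x0"
    \<comment> \<open>dither: i.i.d., uniform on (-Delta/2, Delta/2), independent of (w, x0)\<close>
    and d_meas: "\<And>k. d k \<in> borel_measurable M"
    and d_indep: "prob_space.indep_vars M (\<lambda>_. borel) d UNIV"
    and d_unif: "\<And>k. distr M lborel (d k) = unif_quant_noise \<Delta>"
    and d_indep_wx: "indep_rv M
           (PiM UNIV (\<lambda>_. borel)) (\<lambda>\<omega> k. d k \<omega>)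
           (PiM UNIV (\<lambda>_. borel) \<Otimes>\<^sub>M borel) (\<lambda>\<omega>. (\<lambda>k. w k \<omega>, x0 \<omega>))"
    \<comment> \<open>plant: state-space realization of the proper rational transfer matrix,
        with the r_h-to-t channel strictly proper (no feedthrough)\<close>
    and x_init: "\<And>\<omega>. x 0 \<omega> = x0 \<omega>"
    and x_step: "\<And>k \<omega>. x (Suc k) \<omega> = A *v x k \<omega> + Bw *v w k \<omega> + rh k \<omega> *\<^sub>R Br"
    and z_out: "\<And>k \<omega>. z k \<omega> = Cz *v x k \<omega> + Dzw *v w k \<omega> + rh k \<omega> *\<^sub>R Dzr"
    and t_out: "\<And>k \<omega>. t k \<omega> = Ct \<bullet> x k \<omega> + Dtw \<bullet> w k \<omega>"
    \<comment> \<open>ECDQ with lossless coding and channel delay h\<close>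
    and r_def: "\<And>k \<omega>. r k \<omega> = uniform_quantizer \<Delta> (t k \<omega> + d k \<omega>) - d k \<omega>"
    and rh_def: "\<And>k \<omega>. rh k \<omega> = (if h \<le> k then r (k - h) \<omega> else 0)"
  shows "prob_space.indep_vars M (\<lambda>_. borel) (\<lambda>k \<omega>. r k \<omega> - t k \<omega>) UNIV
       \<and> (\<forall>k. distr M lborel (\<lambda>\<omega>. r k \<omega> - t k \<omega>) = unif_quant_noise \<Delta>)
       \<and> indep_rv M
           (PiM UNIV (\<lambda>_. borel)) (\<lambda>\<omega> k. r k \<omega> - t k \<omega>)
           (PiM UNIV (\<lambda>_. borel) \<Otimes>\<^sub>M borel) (\<lambda>\<omega>. (\<lambda>k. w k \<omega>, x0 \<omega>))"
proof -
  define U where "U = unif_quant_noise \<Delta>"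
  define e where "e = (\<lambda>c u. uniform_quantizer \<Delta> (c + u) - (c + u))"
  have U: "prob_space U" "sets U = sets borel"
    using \<Delta> by (auto simp: U_def unif_quant_noise_def intro!: prob_space_uniform_measure)
  have e: "(\<lambda>(c, u). e c u) \<in> borel_measurable (borel \<Otimes>\<^sub>M borel)"
    unfolding e_def by measurable
  have e_preserving: "distr U borel (e c) = U" for c
    using distr_uniform_quantizer_error[OF \<Delta>] by (simp add: e_def U_def)
  have d_distr: "distr M borel (d k) = U" for k
    using d_unif by (simp add: U_def distr_lborel_eq_borel)
  have error: "r k \<omega> - t k \<omega> = e (loop_output A Bw Br Ct Dtw \<Delta> h (\<lambda>j. w j \<omega>, x0 \<omega>) k (\<lambda>j. d j \<omega>)) (d k \<omega>)"
    for k \<omega>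
  proof -
    have "t k \<omega> = loop_output A Bw Br Ct Dtw \<Delta> h (\<lambda>j. w j \<omega>, x0 \<omega>) k (\<lambda>j. d j \<omega>)"
      by (rule closed_loop_output[where x="\<lambda>k. x k \<omega>" and rh="\<lambda>k. rh k \<omega>" and r="\<lambda>k. r k \<omega>"])
        (simp_all add: x_init x_step t_out r_def rh_def)
    then show ?thesis
      by (simp add: r_def e_def)
  qed
  show ?thesis
    using causal_innovations_iid_indep[OF M U e e_preserving d_meas d_indep d_distr d_indep_wx
        measurable_loop_output[OF refl] strictly_causal_loop_output]
    by (simp add: error U_def distr_lborel_eq_borel)
qed

end
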